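(* In the Restricted Grid Scheduling problem, for any finite multiset of items (each of size $S$ or $L$) and any admissible sequence of bins (each of size in $[S,M]$), there exists an optimal thrifty packing that contains no bad bin.
   Context: Fix an integer $S>1$, $L=2S-1$, $M=4S-3$. Items have size $S$ or $L$; bins have integer sizes in $[S,M]$ and arrive in a sequence, which is admissible if it ends with at least as many bins of size $M$ as there are items. A packing assigns every item to a bin with total item size in each bin at most the bin size; used bins are those receiving at least one item; the cost is the sum of sizes of used bins. A packing is valid if each empty bin is smaller than every item packed in a later bin; optimal if valid and of minimum cost among valid packings. A bin is wasteful if its empty space is at least the size of some item packed in a later bin; a packing is thrifty if it has no wasteful bin. A used bin is bad if it contains at least one item of size $S$, its empty space is at least $L-S$, and some item of size $L$ is packed in a later bin. *)

theory Defs
  imports Main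
begin

text \<open>Restricted Grid Scheduling. Items are given as a list of sizes (a multiset up to
order), bins as a list of sizes in arrival order. A packing is a map from item indices
to bin indices.\<close>

definition Lsz :: "nat \<Rightarrow> nat" where "Lsz S = 2 * S - 1"
definition Msz :: "nat \<Rightarrow> nat" where "Msz S = 4 * S - 3"

definition load :: "nat list \<Rightarrow> (nat \<Rightarrow> nat) \<Rightarrow> nat \<Rightarrow> nat" where
  "load items p j = (\<Sum>i<length items. if p i = j then items ! i else 0)"

definition used :: "nat list \<Rightarrow> (nat \<Rightarrow> nat) \<Rightarrow> nat \<Rightarrow> bool" where
  "used items p j = (\<exists>i<length items. p i = j)"

definition packing :: "nat list \<Rightarrow> nat list \<Rightarrow> (nat \<Rightarrow> nat) \<Rightarrow> bool" where
  "packing items bins p =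
     ((\<forall>i<length items. p i < length bins) \<and>
      (\<forall>j<length bins. load items p j \<le> bins ! j))"

definition cost :: "nat list \<Rightarrow> nat list \<Rightarrow> (nat \<Rightarrow> nat) \<Rightarrow> nat" where
  "cost items bins p = (\<Sum>j | j < length bins \<and> used items p j. bins ! j)"

definition valid :: "nat list \<Rightarrow> nat list \<Rightarrow> (nat \<Rightarrow> nat) \<Rightarrow> bool" where
  "valid items bins p =
     (packing items bins p \<and>
      (\<forall>j<length bins. \<not> used items p j \<longrightarrow>
         (\<forall>i<length items. j < p i \<longrightarrow> bins ! j < items ! i)))"

definition optimal :: "nat list \<Rightarrow> nat list \<Rightarrow> (nat \<Rightarrow> nat) \<Rightarrow> bool" where
  "optimal items bins p =
     (valid items bins p \<and> (\<forall>q. valid items bins q \<longrightarrow> cost items bins p \<le> cost items bins q))"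

definition wasteful :: "nat list \<Rightarrow> nat list \<Rightarrow> (nat \<Rightarrow> nat) \<Rightarrow> nat \<Rightarrow> bool" where
  "wasteful items bins p j =
     (\<exists>i<length items. j < p i \<and> items ! i \<le> bins ! j - load items p j)"

definition thrifty :: "nat list \<Rightarrow> nat list \<Rightarrow> (nat \<Rightarrow> nat) \<Rightarrow> bool" where
  "thrifty items bins p = (\<forall>j<length bins. \<not> wasteful items bins p j)"

definition bad :: "nat \<Rightarrow> nat list \<Rightarrow> nat list \<Rightarrow> (nat \<Rightarrow> nat) \<Rightarrow> nat \<Rightarrow> bool" where
  "bad S items bins p j =
     (used items p j \<and>
      (\<exists>i<length items. p i = j \<and> items ! i = S) \<and>
      Lsz S - S \<le> bins ! j - load items p j \<and>
      (\<exists>i<length items. j < p i \<and> items ! i = Lsz S))"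

definition admissible :: "nat \<Rightarrow> nat list \<Rightarrow> nat list \<Rightarrow> bool" where
  "admissible S items bins =
     (length items \<le> length bins \<and>
      (\<forall>j. length bins - length items \<le> j \<and> j < length bins \<longrightarrow> bins ! j = Msz S))"

end

theory Submission
  imports Defs
begin

text \<open>
  Among the optimal packings take one of least moment \<open>\<Sum>\<^sub>i size(i) \<cdot> bin(i)\<close>; moving an item
  into an earlier bin or exchanging an \<open>S\<close>-item with a later \<open>L\<close>-item lowers the moment.
  (A packing of least moment is automatically valid, so such packings exist.)

  Let bin \<open>j\<close> be bad, with an \<open>S\<close>-item \<open>s\<close> and an \<open>L\<close>-item \<open>l\<close> in a later bin.
  If an empty bin lies between them, let \<open>g\<close> be the first one. Every item after \<open>g\<close> is larger
  than \<open>bins ! g \<ge> S\<close>, so the last used bin holds a single \<open>L\<close>-item; moving it into \<open>j\<close> and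
  \<open>s\<close> into \<open>g\<close> empties a bin of size at least \<open>L\<close> and fills one of size below \<open>L\<close>,
  which lowers the cost. Otherwise exchanging \<open>s\<close> and \<open>l\<close> keeps validity and cost but lowers
  the moment.

  If bin \<open>j\<close> is wasteful, move into it the fitting item from the latest possible bin. If this
  empties a bin, any later item no larger than that bin would either fit into \<open>j\<close> (against the
  choice) or be an \<open>L\<close>-item making the emptied bin bad; so the result is valid, and it is
  either cheaper or of equal cost and smaller moment.
\<close>

lemma sum_fun_upd:
  fixes g :: "nat \<Rightarrow> 'a \<Rightarrow> 'b::comm_monoid_add"
  assumes "i < n"
  shows "(\<Sum>k<n. g k ((p(i := t)) k)) + g i (p i) = (\<Sum>k<n. g k (p k)) + g i t"
proof -
  have "(\<Sum>k<n. g k ((p(i := t)) k)) = g i t + (\<Sum>k\<in>{..<n} - {i}. g k (p k))"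
    using assms by (subst sum.remove[of _ i]) (auto intro!: sum.cong)
  moreover have "(\<Sum>k<n. g k (p k)) = g i (p i) + (\<Sum>k\<in>{..<n} - {i}. g k (p k))"
    using assms by (simp add: sum.remove)
  ultimately show ?thesis
    by (simp add: ac_simps)
qed

lemma ex_max_index:
  fixes f :: "nat \<Rightarrow> 'a::linorder"
  assumes "0 < n"
  shows "\<exists>l<n. \<forall>i<n. f i \<le> f l"
proof -
  have "Max (f ` {..<n}) \<in> f ` {..<n}"
    using assms by (intro Max_in) auto
  then obtain l where "l < n" "Max (f ` {..<n}) = f l"
    by auto
  moreover have "f i \<le> Max (f ` {..<n})" if "i < n" for i
    using that by (intro Max_ge) auto
  ultimately show ?thesis
    by auto
qed

lemma load_fun_upd:
  assumes "i < length items"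
  shows "load items (p(i := t)) x + (if p i = x then items ! i else 0)
       = load items p x + (if t = x then items ! i else 0)"
  using sum_fun_upd[OF assms, of "\<lambda>k y. if y = x then items ! k else 0"]
  by (simp add: load_def)

lemma load_swap:
  assumes "a < length items" "b < length items" "a \<noteq> b"
  shows "load items (p(a := s, b := t)) x + (if p a = x then items ! a else 0)
           + (if p b = x then items ! b else 0)
       = load items p x + (if s = x then items ! a else 0) + (if t = x then items ! b else 0)"
  using load_fun_upd[OF assms(1), of p s x] load_fun_upd[OF assms(2), of "p(a := s)" t x] assms(3)
  by simp

lemma item_le_load: "i < length items \<Longrightarrow> items ! i \<le> load items p (p i)"
  unfolding load_def by (rule order_trans[OF _ member_le_sum[of i]]) auto

lemma two_items_le_load:
  assumes "a < length items" "b < length items" "a \<noteq> b" "p a = p b"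
  shows "items ! a + items ! b \<le> load items p (p a)"
proof -
  have "(\<Sum>k\<in>{a, b}. if p k = p a then items ! k else 0) \<le> load items p (p a)"
    unfolding load_def by (rule sum_mono2) (use assms in auto)
  then show ?thesis
    using assms by simp
qed

lemma used_iff_mem_image: "used items p j \<longleftrightarrow> j \<in> p ` {..<length items}"
  unfolding used_def by auto

lemma load_unused: "\<not> used items p j \<Longrightarrow> load items p j = 0"
  unfolding load_def used_def by (auto intro!: sum.neutral)

lemma cost_eq_sum_image:
  "packing items bins p \<Longrightarrow> cost items bins p = (\<Sum>j\<in>p ` {..<length items}. bins ! j)"
  unfolding cost_def packing_def used_def by (rule sum.cong) auto

lemma cost_drop_bin:
  assumes "packing items bins p" "packing items bins q"
    and "q ` {..<length items} = p ` {..<length items} - {k}" "k \<in> p ` {..<length items}"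
  shows "cost items bins q + bins ! k = cost items bins p"
  using assms by (simp add: cost_eq_sum_image sum.remove)

lemma cost_replace_bin:
  assumes "packing items bins p" "packing items bins q"
    and "q ` {..<length items} = insert g (p ` {..<length items} - {k})"
    and "k \<in> p ` {..<length items}" "g \<notin> p ` {..<length items}"
  shows "cost items bins q + bins ! k = cost items bins p + bins ! g"
  using assms by (simp add: cost_eq_sum_image sum.remove)

definition moment :: "nat list \<Rightarrow> (nat \<Rightarrow> nat) \<Rightarrow> nat" where
  "moment items p = (\<Sum>i<length items. items ! i * p i)"

lemma moment_fun_upd:
  "i < length items \<Longrightarrow> moment items (p(i := t)) + items ! i * p i = moment items p + items ! i * t"
  using sum_fun_upd[of i "length items" "\<lambda>k y. items ! k * y" p t] by (simp add: moment_def)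

lemma moment_swap:
  assumes "a < length items" "b < length items" "a \<noteq> b"
  shows "moment items (p(a := s, b := t)) + items ! a * p a + items ! b * p b
       = moment items p + items ! a * s + items ! b * t"
  using moment_fun_upd[OF assms(1), of p s] moment_fun_upd[OF assms(2), of "p(a := s)" t] assms(3)
  by simp

lemma packing_move:
  assumes p: "packing items bins p" and i: "i < length items" and j: "j < length bins"
    and room: "items ! i \<le> bins ! j - load items p j"
  shows "packing items bins (p(i := j))"
  unfolding packing_def
proof (intro conjI allI impI)
  fix x assume x: "x < length bins"
  have "load items p x \<le> bins ! x" "load items p j \<le> bins ! j"
    using p x j by (auto simp: packing_def)
  then show "load items (p(i := j)) x \<le> bins ! x"
    using load_fun_upd[OF i, of p j x] room by (cases "x = j") auto
qed (use p j in \<open>auto simp: packing_def\<close>)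

lemma packing_exchange:
  assumes p: "packing items bins p" and a: "a < length items" and b: "b < length items" "a \<noteq> b"
    and room: "load items p (p a) + items ! b \<le> bins ! p a + items ! a"
    and t: "t < length bins" "t \<noteq> p a"
    and room_t: "load items p t + items ! a \<le> bins ! t + (if p b = t then items ! b else 0)"
  shows "packing items bins (p(a := t, b := p a))"
  unfolding packing_def
proof (intro conjI allI impI)
  show "(p(a := t, b := p a)) i < length bins" if "i < length items" for i
    using that p a t by (auto simp: packing_def)
  fix x assume x: "x < length bins"
  have "load items p x \<le> bins ! x"
    using p x by (simp add: packing_def)
  then show "load items (p(a := t, b := p a)) x \<le> bins ! x"
    using load_swap[OF a b, of p t "p a" x] room room_t t(2) by (cases "x = p a"; cases "x = t") auto
qed

lemma load_lone_item:
  assumes "i < length items" "\<forall>i'<length items. i' \<noteq> i \<longrightarrow> p i' \<noteq> p i"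
  shows "load items p (p i) = items ! i"
proof -
  have "load items p (p i) = (\<Sum>k<length items. if k = i then items ! k else 0)"
    unfolding load_def using assms(2) by (intro sum.cong) auto
  then show ?thesis
    using assms(1) by simp
qed

lemma valid_update:
  assumes p: "valid items bins p" and q: "packing items bins q"
    and emptied: "\<And>x i. x < length bins \<Longrightarrow> used items p x \<Longrightarrow> \<not> used items q x
                   \<Longrightarrow> i < length items \<Longrightarrow> x < q i \<Longrightarrow> bins ! x < items ! i"
    and stays_behind: "\<And>x i. x < length bins \<Longrightarrow> \<not> used items p x \<Longrightarrow> \<not> used items q x
                   \<Longrightarrow> i < length items \<Longrightarrow> x < q i \<Longrightarrow> x < p i"
  shows "valid items bins q"
  using p q emptied stays_behind unfolding valid_def by blast


lemma valid_move_earlier: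
  assumes p: "valid items bins p" and i: "i < length items" and j: "j < length bins" "j < p i"
    and room: "items ! i \<le> bins ! j - load items p j"
    and emptied: "\<And>i'. \<forall>k<length items. k \<noteq> i \<longrightarrow> p k \<noteq> p i \<Longrightarrow> i' < length items
                   \<Longrightarrow> p i < p i' \<Longrightarrow> bins ! p i < items ! i'"
  shows "valid items bins (p(i := j))"
proof (rule valid_update[OF p packing_move[OF _ i j(1) room]])
  show "packing items bins p"
    using p by (simp add: valid_def)
next
  fix x i' assume "used items p x" "\<not> used items (p(i := j)) x" "i' < length items" "x < (p(i := j)) i'"
  moreover have "x = p i" "\<forall>k<length items. k \<noteq> i \<longrightarrow> p k \<noteq> p i"
    using calculation(1,2) unfolding used_def by (metis fun_upd_other)+
  ultimately show "bins ! x < items ! i'"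
    using emptied j(2) by (cases "i' = i") auto
next
  fix x i' assume "x < (p(i := j)) i'"
  then show "x < p i'"
    using j(2) by (cases "i' = i") auto
qed

lemma valid_if_moment_minimal:
  assumes p: "packing items bins p" and pos: "0 \<notin> set items"
    and min: "\<And>q. packing items bins q \<Longrightarrow> moment items p \<le> moment items q"
  shows "valid items bins p"
  unfolding valid_def
proof (intro conjI allI impI p)
  fix j i
  assume j: "j < length bins" and empty: "\<not> used items p j" and i: "i < length items" and ji: "j < p i"
  show "bins ! j < items ! i"
  proof (rule ccontr)
    assume "\<not> bins ! j < items ! i"
    have "0 < items ! i"
      using pos i by (metis gr0I nth_mem)
    then have "moment items (p(i := j)) < moment items p"
      using moment_fun_upd[OF i, of p j] mult_less_mono2[OF ji, of "items ! i"] by linarith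
    moreover have "packing items bins (p(i := j))"
      using packing_move[OF p i j] load_unused[OF empty] \<open>\<not> bins ! j < items ! i\<close> by simp
    ultimately show False
      using min by (meson not_le)
  qed
qed

locale grid_instance =
  fixes S :: nat and items bins :: "nat list"
  assumes S_gt_1: "S > 1"
    and item_sizes: "\<forall>x\<in>set items. x = S \<or> x = Lsz S"
    and bin_sizes: "\<forall>b\<in>set bins. S \<le> b \<and> b \<le> Msz S"
    and admissible: "admissible S items bins"
begin

lemma item_cases: "i < length items \<Longrightarrow> items ! i = S \<or> items ! i = Lsz S"
  using item_sizes nth_mem by blast

lemma bin_bounds: "j < length bins \<Longrightarrow> S \<le> bins ! j \<and> bins ! j \<le> Msz S"
  using bin_sizes nth_mem by blast

lemma size_bounds: "S < Lsz S" "Lsz S \<le> Msz S" "Msz S < 2 * Lsz S"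
  using S_gt_1 unfolding Lsz_def Msz_def by auto

lemma item_pos: "i < length items \<Longrightarrow> 0 < items ! i"
  using item_cases S_gt_1 size_bounds(1) by fastforce

lemma packing_exists: "packing items bins (\<lambda>i. length bins - length items + i)"
  unfolding packing_def
proof (intro conjI allI impI)
  let ?p = "\<lambda>i. length bins - length items + i"
  have nm: "length items \<le> length bins"
    using admissible by (simp add: admissible_def)
  then show "?p i < length bins" if "i < length items" for i
    using that by simp
  fix x assume x: "x < length bins"
  show "load items ?p x \<le> bins ! x"
  proof (cases "length bins - length items \<le> x")
    case True
    define i where "i = x - (length bins - length items)"
    have i: "i < length items" and pi: "?p i = x"
      using True x nm by (auto simp: i_def)
    have "load items ?p x = (\<Sum>k<length items. if k = i then items ! k else 0)"
      unfolding load_def using pi by (intro sum.cong) auto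
    also have "\<dots> = items ! i"
      using i by simp
    also have "\<dots> \<le> Msz S"
      using item_cases[OF i] size_bounds by auto
    also have "\<dots> = bins ! x"
      using admissible True x by (simp add: admissible_def)
    finally show ?thesis .
  next
    case False
    then have "load items ?p x = 0"
      unfolding load_def by (intro sum.neutral) auto
    then show ?thesis
      by simp
  qed
qed

lemma optimal_min_moment_exists:
  "\<exists>p. optimal items bins p \<and> (\<forall>q. optimal items bins q \<longrightarrow> moment items p \<le> moment items q)"
proof -
  obtain p0 where "packing items bins p0"
      and "\<forall>q. packing items bins q \<longrightarrow> moment items p0 \<le> moment items q"
    using ex_has_least_nat[of "packing items bins" _ "moment items"] packing_exists by blast
  moreover have "0 \<notin> set items"
    using item_sizes S_gt_1 size_bounds by auto
  ultimately have "valid items bins p0"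
    using valid_if_moment_minimal by blast
  then obtain p1 where "optimal items bins p1"
    using ex_has_least_nat[of "valid items bins" p0 "cost items bins"] unfolding optimal_def by blast
  then show ?thesis
    using ex_has_least_nat[of "optimal items bins" p1 "moment items"] by blast
qed

end

locale min_moment_packing = grid_instance +
  fixes p :: "nat \<Rightarrow> nat"
  assumes optimal: "optimal items bins p"
    and moment_min: "\<And>q. optimal items bins q \<Longrightarrow> moment items p \<le> moment items q"
begin

lemma valid: "valid items bins p"
  using optimal by (simp add: optimal_def)

lemma packing: "packing items bins p"
  using valid by (simp add: valid_def)

lemma bin_in_range: "i < length items \<Longrightarrow> p i < length bins"
  using packing by (simp add: packing_def)

lemma load_fits: "j < length bins \<Longrightarrow> load items p j \<le> bins ! j"
  using packing by (simp add: packing_def)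

lemma empty_bin_lt_later_item:
  "j < length bins \<Longrightarrow> \<not> used items p j \<Longrightarrow> i < length items \<Longrightarrow> j < p i \<Longrightarrow> bins ! j < items ! i"
  using valid by (simp add: valid_def)

lemma cost_le: "valid items bins q \<Longrightarrow> cost items bins p \<le> cost items bins q"
  using optimal by (simp add: optimal_def)

lemma moment_le:
  assumes "valid items bins q" "cost items bins q \<le> cost items bins p"
  shows "moment items p \<le> moment items q"
proof -
  have "optimal items bins q"
    using assms cost_le unfolding optimal_def by (meson order_trans)
  then show ?thesis
    by (rule moment_min)
qed

lemma last_bin_after_empty_bin_single_large:
  assumes x: "x < length bins" "\<not> used items p x"
    and l: "l < length items" "x < p l" and last: "\<forall>i<length items. p i \<le> p l"
  shows "items ! l = Lsz S" "\<forall>i<length items. i \<noteq> l \<longrightarrow> p i \<noteq> p l"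
proof -
  have large: "items ! i = Lsz S" if "i < length items" "p i = p l" for i
  proof -
    have "S \<le> bins ! x" "bins ! x < items ! i"
      using bin_bounds[OF x(1)] empty_bin_lt_later_item[OF x that(1)] that(2) l(2) by auto
    then show ?thesis
      using item_cases[OF that(1)] by auto
  qed
  then show "items ! l = Lsz S"
    using l(1) by blast
  show "\<forall>i<length items. i \<noteq> l \<longrightarrow> p i \<noteq> p l"
  proof (intro allI impI notI)
    fix i assume i: "i < length items" "i \<noteq> l" "p i = p l"
    have "items ! i + items ! l \<le> bins ! p l"
      using two_items_le_load[OF i(1) l(1) i(2,3)] load_fits[OF bin_in_range[OF l(1)]] i(3) by simp
    then show False
      using large[OF i(1,3)] large[OF l(1) refl] bin_bounds[OF bin_in_range[OF l(1)]] size_bounds(3)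
      by linarith
  qed
qed

lemma no_bad_bin_before_gap:
  assumes s: "s < length items" "p s = j" "items ! s = S"
    and room: "load items p j + Lsz S \<le> bins ! j + S"
    and gap: "j < g" "g < length bins" "\<not> used items p g"
    and filled: "\<And>x. j < x \<Longrightarrow> x < g \<Longrightarrow> used items p x"
    and later: "i < length items" "g < p i"
  shows False
proof -
  obtain l where l: "l < length items" and last: "\<forall>i<length items. p i \<le> p l"
    using ex_max_index[of "length items" p] later(1) by (metis gr_zeroI not_less_zero)
  define k where "k = p l"
  have gk: "g < k"
    using later last k_def by fastforce
  have k: "k < length bins" and j: "j < length bins"
    using bin_in_range l s k_def by auto
  have large: "items ! l = Lsz S" and alone: "\<forall>i<length items. i \<noteq> l \<longrightarrow> p i \<noteq> k"
    using last_bin_after_empty_bin_single_large[OF gap(2,3) l _ last] gk k_def by auto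
  have sl: "s \<noteq> l"
    using s gap gk k_def by auto
  define q where "q = p(s := g, l := j)"
  have packing_q: "packing items bins q"
    unfolding q_def using packing_exchange[OF packing s(1) l sl _ gap(2)] room s large
      load_unused[OF gap(3)] bin_bounds[OF gap(2)] gap(1) gk k_def by simp
  have image_q: "q ` {..<length items} = insert g (p ` {..<length items} - {k})"
    using s l sl alone gap gk k_def by (auto simp: q_def image_iff)
  have "valid items bins q"
  proof (rule valid_update[OF valid packing_q])
    fix x i' assume "used items p x" "\<not> used items q x" "i' < length items" "x < q i'"
    moreover have "q i' \<le> k"
      using \<open>i' < length items\<close> last gap(1) gk k_def by (simp add: q_def)
    ultimately show "bins ! x < items ! i'"
      using image_q by (auto simp: used_iff_mem_image)
  next
    fix x i' assume x: "\<not> used items p x" and i': "i' < length items" "x < q i'"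
    have "x \<noteq> j"
      using x s by (auto simp: used_def)
    then show "x < p i'"
      using i' filled[of x] x s gap(1) gk sl k_def by (auto simp: q_def split: if_splits; linarith)
  qed
  moreover have "cost items bins q + bins ! k = cost items bins p + bins ! g"
    by (rule cost_replace_bin[OF packing packing_q image_q])
      (use l k_def gap(3) in \<open>auto simp: used_iff_mem_image\<close>)
  moreover have "bins ! g < bins ! k"
    using empty_bin_lt_later_item[OF gap(2,3) l] gk large item_le_load[OF l, of p] load_fits[OF k] k_def
    by simp
  ultimately show False
    using cost_le by fastforce
qed

lemma no_bad_bin_without_gap:
  assumes s: "s < length items" "p s = j" "items ! s = S"
    and room: "load items p j + Lsz S \<le> bins ! j + S"
    and l: "l < length items" "items ! l = Lsz S" "j < p l"
    and filled: "\<And>x. j < x \<Longrightarrow> x < p l \<Longrightarrow> used items p x"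
  shows False
proof -
  define k where "k = p l"
  have k: "k < length bins"
    using bin_in_range[OF l(1)] k_def by simp
  have sl: "s \<noteq> l"
    using s l by auto
  define q where "q = p(s := k, l := j)"
  have packing_q: "packing items bins q"
    unfolding q_def using packing_exchange[OF packing s(1) l(1) sl _ k] room s l load_fits[OF k]
      size_bounds(1) k_def by simp
  have image_q: "q ` {..<length items} = p ` {..<length items}"
    unfolding q_def k_def using s(1,2) l(1) sl by (auto simp: image_iff)
  have "valid items bins q"
  proof (rule valid_update[OF valid packing_q])
    fix x i' assume "used items p x" "\<not> used items q x"
    then show "bins ! x < items ! i'"
      using image_q by (simp add: used_iff_mem_image)
  next
    fix x i' assume x: "\<not> used items p x" and i': "i' < length items" "x < q i'"
    have "x \<noteq> j"
      using x s by (auto simp: used_def)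
    then show "x < p i'"
      using i' filled[of x] x s(2) l(3) sl k_def by (auto simp: q_def split: if_splits; linarith)
  qed
  moreover have "cost items bins q = cost items bins p"
    using packing_q packing image_q by (simp add: cost_eq_sum_image)
  moreover have "moment items q < moment items p"
  proof -
    obtain d where d: "k = j + d" "0 < d"
      using l(3) k_def less_imp_add_positive by metis
    have "S * d < Lsz S * d"
      using d(2) size_bounds(1) by (rule mult_strict_right_mono[rotated])
    then have "S * k + Lsz S * j < S * j + Lsz S * k"
      unfolding d(1) by (simp add: algebra_simps)
    then show ?thesis
      using moment_swap[OF s(1) l(1) sl, of p k j] unfolding q_def k_def s(2,3) l(2) by linarith
  qed
  ultimately show False
    using moment_le[of q] by simp
qed

lemma no_bad: "j < length bins \<Longrightarrow> \<not> bad S items bins p j"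
proof
  assume j: "j < length bins" and "bad S items bins p j"
  then obtain s l where s: "s < length items" "p s = j" "items ! s = S"
    and free: "Lsz S - S \<le> bins ! j - load items p j"
    and l: "l < length items" "j < p l" "items ! l = Lsz S"
    unfolding bad_def by blast
  have room: "load items p j + Lsz S \<le> bins ! j + S"
    using free load_fits[OF j] size_bounds(1) by linarith
  show False
  proof (cases "\<exists>g. j < g \<and> g < p l \<and> \<not> used items p g")
    case True
    define g where "g = (LEAST g. j < g \<and> g < p l \<and> \<not> used items p g)"
    have g: "j < g" "g < p l" "\<not> used items p g"
      using LeastI_ex[OF True] unfolding g_def by auto
    have "used items p x" if "j < x" "x < g" for x
    proof -
      have "\<not> (j < x \<and> x < p l \<and> \<not> used items p x)"
        using not_less_Least[OF that(2)[unfolded g_def]] .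
      then show ?thesis
        using that g(2) by auto
    qed
    then show False
      using no_bad_bin_before_gap[OF s room g(1) _ g(3) _ l(1) g(2)] g(2) bin_in_range[OF l(1)] by auto
  next
    case False
    then show False
      using no_bad_bin_without_gap[OF s room l(1,3,2)] by auto
  qed
qed

lemma lone_small_item_bin_lt_Lsz:
  assumes i: "i < length items" "items ! i = S" and alone: "\<forall>i'<length items. i' \<noteq> i \<longrightarrow> p i' \<noteq> p i"
    and l: "l < length items" "p i < p l" "items ! l = Lsz S"
  shows "bins ! p i < Lsz S"
proof (rule ccontr)
  assume "\<not> bins ! p i < Lsz S"
  then have "bad S items bins p (p i)"
    unfolding bad_def using i l load_lone_item[OF i(1) alone] by (auto simp: used_def)
  then show False
    using no_bad bin_in_range[OF i(1)] by blast
qed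

lemma no_valid_move_earlier:
  assumes i: "i < length items" and j: "used items p j" "j < p i"
    and valid_moved: "valid items bins (p(i := j))"
  shows False
proof -
  define q where "q = p(i := j)"
  have valid_q: "valid items bins q"
    using valid_moved by (simp add: q_def)
  have image_q: "q ` {..<length items} = p ` ({..<length items} - {i})"
    using i j unfolding used_def by (force simp: q_def fun_upd_image)
  have packing_q: "packing items bins q"
    using valid_q by (simp add: valid_def)
  show False
  proof (cases "p i \<in> p ` ({..<length items} - {i})")
    case True
    then have "q ` {..<length items} = p ` {..<length items}"
      using image_q i by blast
    then have "cost items bins q = cost items bins p"
      using packing packing_q by (simp add: cost_eq_sum_image)
    moreover have "moment items q < moment items p"
      using moment_fun_upd[OF i, of p j] mult_less_mono2[OF j(2) item_pos[OF i]] unfolding q_def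
      by linarith
    ultimately show False
      using moment_le[OF valid_q] by simp
  next
    case False
    then have "q ` {..<length items} = p ` {..<length items} - {p i}"
      using image_q i by blast
    then have "cost items bins q + bins ! p i = cost items bins p"
      using packing packing_q i by (intro cost_drop_bin) auto
    moreover have "0 < bins ! p i"
      using bin_bounds[OF bin_in_range[OF i]] S_gt_1 by simp
    ultimately show False
      using cost_le[OF valid_q] by simp
  qed
qed

lemma thrifty: "thrifty items bins p"
  unfolding thrifty_def
proof (intro allI impI notI)
  fix j assume j: "j < length bins" and "wasteful items bins p j"
  define fits where "fits i \<longleftrightarrow> i < length items \<and> j < p i \<and> items ! i \<le> bins ! j - load items p j" for i
  obtain i where "fits i" and last: "\<And>i'. fits i' \<Longrightarrow> p i' \<le> p i"
    using Lattices_Big.ex_has_greatest_nat[of fits _ p "length bins"] \<open>wasteful items bins p j\<close> bin_in_range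
    unfolding wasteful_def fits_def by metis
  then have i: "i < length items" and ji: "j < p i" and room: "items ! i \<le> bins ! j - load items p j"
    unfolding fits_def by auto
  have "used items p j"
    using empty_bin_lt_later_item[OF j _ i ji] room load_unused by fastforce
  moreover have "valid items bins (p(i := j))"
  proof (rule valid_move_earlier[OF valid i j ji room])
    fix i' assume alone: "\<forall>k<length items. k \<noteq> i \<longrightarrow> p k \<noteq> p i"
      and i': "i' < length items" "p i < p i'"
    show "bins ! p i < items ! i'"
    proof (cases "items ! i' \<le> bins ! j - load items p j")
      case True
      then show ?thesis
        using last[of i'] i' ji unfolding fits_def by auto
    next
      case False
      then have "items ! i = S" "items ! i' = Lsz S"
        using room item_cases[OF i] item_cases[OF i'(1)] size_bounds(1) by auto
      then show ?thesis
        using lone_small_item_bin_lt_Lsz[OF i _ alone i'] by simp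
    qed
  qed
  ultimately show False
    using no_valid_move_earlier[OF i _ ji] by simp
qed

end

theorem lemma3:
  fixes S :: nat and items bins :: "nat list"
  assumes "S > 1"
    and "\<forall>x\<in>set items. x = S \<or> x = Lsz S"
    and "\<forall>b\<in>set bins. S \<le> b \<and> b \<le> Msz S"
    and "admissible S items bins"
  shows "\<exists>p. optimal items bins p \<and> thrifty items bins p \<and>
             (\<forall>j<length bins. \<not> bad S items bins p j)"
proof -
  interpret grid_instance S items bins
    using assms by unfold_locales
  obtain p where "optimal items bins p" "\<forall>q. optimal items bins q \<longrightarrow> moment items p \<le> moment items q"
    using optimal_min_moment_exists by blast
  then interpret min_moment_packing S items bins p
    by unfold_locales auto
  show ?thesis
    using optimal thrifty no_bad by blast
qed

end
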